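(* Let $X \subset \mathbb{R}^d$ be a finite set of $n = |X| \geq 2$ points, and let $x^*, y^* \in X$, $x^* \neq y^*$, be a pair of distinct points minimizing $\|x - y\|^2$ over all pairs of distinct points of $X$. Let $\kappa_\sigma(x,y) = \exp\left(-\|x-y\|^2/\sigma\right)$ be the RBF kernel with bandwidth $\sigma > 0$, and suppose \[ \sigma \leq \frac{\|x^* - y^*\|^2}{\log(3n)} . \] Then, for any $k$ and any $k$-partition $\pi_1,\dots,\pi_k$ of $X$ used as the current partition, {\tt Kernel $k$-means} run with $\kappa_\sigma$ makes no cluster reassignments; that is, for every $x \in X$, if $x \in \pi_j$ then $\|\phi(x) - m_j\|^2 \leq \|\phi(x) - m_i\|^2$ for all $i = 1,\dots,k$.
   Context: Norms are Euclidean and $\log$ is the natural logarithm. A $k$-partition of $X$ is a collection of $k$ non-empty, pairwise disjoint subsets $\pi_1,\dots,\pi_k$ (clusters) whose union is $X$; $n_i = |\pi_i|$. For a positive definite kernel $\kappa$ with implicit feature map $\phi$, the feature-space centroid of cluster $\pi_i$ is $m_i = \frac{1}{n_i}\sum_{x\in\pi_i}\phi(x)$, and the squared feature-space distance is computed as \[ \|\phi(x) - m_i\|^2 = \kappa(x,x) - \frac{2\sum_{y\in\pi_i}\kappa(x,y)}{n_i} + \frac{\sum_{y,z\in\pi_i}\kappa(y,z)}{n_i^2}. \] {\tt Kernel $k$-means} is Lloyd's algorithm using these distances: starting from a $k$-partition, it repeatedly reassigns each point to the cluster whose feature-space centroid is closest to it (a point is moved out of its current cluster only if some other cluster's centroid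 is strictly closer), until no point changes cluster. *)

theory Defs
  imports "HOL-Analysis.Analysis"
begin

definition rbf_kernel :: "real \<Rightarrow> 'a::real_normed_vector \<Rightarrow> 'a \<Rightarrow> real" where
  "rbf_kernel \<sigma> x y = exp (- (norm (x - y))\<^sup>2 / \<sigma>)"

text \<open>Squared feature-space distance from phi(x) to the centroid of cluster C,
  computed via the kernel trick.\<close>
definition feat_dist :: "('a \<Rightarrow> 'a \<Rightarrow> real) \<Rightarrow> 'a set \<Rightarrow> 'a \<Rightarrow> real" where
  "feat_dist \<kappa> C x =
     \<kappa> x x - 2 * (\<Sum>y\<in>C. \<kappa> x y) / real (card C)
     + (\<Sum>y\<in>C. \<Sum>z\<in>C. \<kappa> y z) / (real (card C))\<^sup>2"

definition is_k_partition :: "'a set \<Rightarrow> nat \<Rightarrow> (nat \<Rightarrow> 'a set) \<Rightarrow> bool" where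
  "is_k_partition X k P \<longleftrightarrow>
     (\<forall>i<k. P i \<noteq> {}) \<and>
     (\<forall>i<k. \<forall>j<k. i \<noteq> j \<longrightarrow> P i \<inter> P j = {}) \<and>
     (\<Union>i<k. P i) = X"

end

theory Submission
  imports Defs
begin

text \<open>For a kernel with unit diagonal, nonnegative values and off-diagonal values at most
  \<open>e\<close>, the feature-space distance of \<open>x\<close> to the centroid of its own cluster \<open>C\<close> is at most
  \<open>1 - 1/|C| + e\<close>, while its distance to the centroid of any cluster \<open>C'\<close> not containing it
  is at least \<open>1 - 2e + 1/|C'|\<close>. The bandwidth condition makes the RBF kernel satisfy this
  with \<open>e = 1/(3n)\<close>, and then \<open>3e \<le> 1/|C'|\<close> closes the gap.\<close>

lemma sum_row_ge_diag:
  fixes K :: "'a \<Rightarrow> 'a \<Rightarrow> real"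
  assumes "finite C" "x \<in> C" "\<forall>y\<in>C. K x y \<ge> 0"
  shows "(\<Sum>y\<in>C. K x y) \<ge> K x x"
proof -
  have "(\<Sum>y\<in>C. K x y) = K x x + (\<Sum>y\<in>C - {x}. K x y)"
    using assms by (simp add: sum.remove)
  moreover have "(\<Sum>y\<in>C - {x}. K x y) \<ge> 0"
    using assms by (intro sum_nonneg) auto
  ultimately show ?thesis by simp
qed

lemma sum_row_le_diag_plus:
  fixes K :: "'a \<Rightarrow> 'a \<Rightarrow> real"
  assumes "finite C" "x \<in> C" "\<forall>y\<in>C. y \<noteq> x \<longrightarrow> K x y \<le> e"
  shows "(\<Sum>y\<in>C. K x y) \<le> K x x + (real (card C) - 1) * e"
proof -
  have "card C \<ge> 1"
    using assms(1,2) by (metis One_nat_def Suc_leI card_gt_0_iff empty_iff)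
  have "(\<Sum>y\<in>C. K x y) = K x x + (\<Sum>y\<in>C - {x}. K x y)"
    using assms by (simp add: sum.remove)
  also have "\<dots> \<le> K x x + (\<Sum>y\<in>C - {x}. e)"
    using assms by (intro add_left_mono sum_mono) auto
  also have "(\<Sum>y\<in>C - {x}. e) = (real (card C) - 1) * e"
    using assms \<open>card C \<ge> 1\<close> by (simp add: card_Diff_singleton of_nat_diff)
  finally show ?thesis .
qed

lemma feat_dist_own_cluster_le:
  fixes K :: "'a \<Rightarrow> 'a \<Rightarrow> real"
  assumes "finite C" "x \<in> C" "e \<ge> 0"
    and "\<forall>y\<in>C. K y y = 1" "\<forall>y\<in>C. \<forall>z\<in>C. K y z \<ge> 0"
    and "\<forall>y\<in>C. \<forall>z\<in>C. y \<noteq> z \<longrightarrow> K y z \<le> e"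
  shows "feat_dist K C x \<le> 1 - 1 / real (card C) + e"
proof -
  define a where "a = real (card C)"
  have "a \<ge> 1"
    using assms(1,2) by (auto simp: a_def card_gt_0_iff Suc_le_eq)
  have row: "(\<Sum>y\<in>C. K x y) \<ge> 1"
    using sum_row_ge_diag[of C x K] assms by auto
  have "(\<Sum>y\<in>C. \<Sum>z\<in>C. K y z) \<le> (\<Sum>y\<in>C. 1 + (a - 1) * e)"
    unfolding a_def using assms
    by (intro sum_mono) (metis sum_row_le_diag_plus)
  then have total: "(\<Sum>y\<in>C. \<Sum>z\<in>C. K y z) \<le> a * (1 + (a - 1) * e)"
    by (simp add: a_def)
  have "feat_dist K C x = 1 - 2 * (\<Sum>y\<in>C. K x y) / a + (\<Sum>y\<in>C. \<Sum>z\<in>C. K y z) / a\<^sup>2"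
    using assms by (simp add: feat_dist_def a_def)
  also have "\<dots> \<le> 1 - 2 * 1 / a + a * (1 + (a - 1) * e) / a\<^sup>2"
    using row total \<open>a \<ge> 1\<close>
    by (intro add_mono diff_mono divide_right_mono divide_left_mono) auto
  also have "\<dots> = 1 - 1 / a + (a - 1) / a * e"
    using \<open>a \<ge> 1\<close> by (simp add: field_simps power2_eq_square)
  also have "\<dots> \<le> 1 - 1 / a + e"
    using \<open>a \<ge> 1\<close> \<open>e \<ge> 0\<close> by (simp add: pos_divide_le_eq algebra_simps)
  finally show ?thesis by (simp add: a_def)
qed

lemma feat_dist_other_cluster_ge:
  fixes K :: "'a \<Rightarrow> 'a \<Rightarrow> real"
  assumes "finite C" "C \<noteq> {}" "K x x = 1"
    and "\<forall>y\<in>C. K y y = 1" "\<forall>y\<in>C. \<forall>z\<in>C. K y z \<ge> 0"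
    and "\<forall>y\<in>C. K x y \<le> e"
  shows "feat_dist K C x \<ge> 1 - 2 * e + 1 / real (card C)"
proof -
  define b where "b = real (card C)"
  have "b \<ge> 1"
    using assms(1,2) by (simp add: b_def card_gt_0_iff Suc_le_eq)
  have row: "(\<Sum>y\<in>C. K x y) \<le> b * e"
    using sum_mono[of C "K x" "\<lambda>_. e"] assms(6) by (simp add: b_def)
  have "(\<Sum>y\<in>C. 1) \<le> (\<Sum>y\<in>C. \<Sum>z\<in>C. K y z)"
    using assms by (intro sum_mono) (metis sum_row_ge_diag)
  then have total: "b \<le> (\<Sum>y\<in>C. \<Sum>z\<in>C. K y z)"
    by (simp add: b_def)
  have "1 - 2 * e + 1 / b = 1 - 2 * (b * e) / b + b / b\<^sup>2"
    using \<open>b \<ge> 1\<close> by (simp add: field_simps power2_eq_square)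
  also have "\<dots> \<le> 1 - 2 * (\<Sum>y\<in>C. K x y) / b + (\<Sum>y\<in>C. \<Sum>z\<in>C. K y z) / b\<^sup>2"
    using row total \<open>b \<ge> 1\<close> by (intro add_mono diff_mono divide_right_mono) auto
  also have "\<dots> = feat_dist K C x"
    using assms(3) by (simp add: feat_dist_def b_def)
  finally show ?thesis by (simp add: b_def)
qed

lemma feat_dist_own_cluster_le_other:
  fixes K :: "'a \<Rightarrow> 'a \<Rightarrow> real"
  assumes "finite X" "C \<subseteq> X" "C' \<subseteq> X" "C' \<noteq> {}" "x \<in> C" "x \<notin> C'"
    and "\<forall>y\<in>X. K y y = 1" "\<forall>y\<in>X. \<forall>z\<in>X. K y z \<ge> 0"
    and "\<forall>y\<in>X. \<forall>z\<in>X. y \<noteq> z \<longrightarrow> K y z \<le> e"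
    and "e \<ge> 0" "3 * e * real (card X) \<le> 1"
  shows "feat_dist K C x \<le> feat_dist K C' x"
proof -
  have "finite C" "finite C'"
    using assms(1-3) finite_subset by auto
  have own: "feat_dist K C x \<le> 1 - 1 / real (card C) + e"
    using assms \<open>finite C\<close> by (intro feat_dist_own_cluster_le) (auto simp: subset_iff)
  have other: "feat_dist K C' x \<ge> 1 - 2 * e + 1 / real (card C')"
    using assms \<open>finite C'\<close> by (intro feat_dist_other_cluster_ge) (force simp: subset_iff)+
  have "0 < real (card C')" "real (card C') \<le> real (card X)"
    using \<open>finite C'\<close> assms(1,3,4) by (auto simp: card_gt_0_iff card_mono)
  moreover have "3 * e * real (card C') \<le> 3 * e * real (card X)"
    using \<open>real (card C') \<le> real (card X)\<close> \<open>e \<ge> 0\<close> by (intro mult_left_mono) auto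
  ultimately have "3 * e \<le> 1 / real (card C')"
    using assms(11) by (simp add: pos_le_divide_eq)
  moreover have "1 / real (card C) \<ge> 0"
    by simp
  ultimately show ?thesis
    using own other by linarith
qed

lemma rbf_kernel_self [simp]: "rbf_kernel \<sigma> x x = 1"
  by (simp add: rbf_kernel_def)

lemma rbf_kernel_nonneg: "rbf_kernel \<sigma> x y \<ge> 0"
  by (simp add: rbf_kernel_def)

lemma rbf_kernel_le_inverse:
  assumes "\<sigma> > 0" "c > 0" "\<sigma> * ln c \<le> (norm (x - y))\<^sup>2"
  shows "rbf_kernel \<sigma> x y \<le> 1 / c"
proof -
  have "ln c \<le> (norm (x - y))\<^sup>2 / \<sigma>"
    using assms(1,3) by (simp add: pos_le_divide_eq mult.commute)
  then have "rbf_kernel \<sigma> x y \<le> exp (- ln c)"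
    by (simp add: rbf_kernel_def)
  also have "\<dots> = 1 / c"
    using assms(2) by (simp add: exp_minus inverse_eq_divide)
  finally show ?thesis .
qed

theorem theorem1:
  fixes X :: "('d::euclidean_space) set" and xs ys :: 'd and \<sigma> :: real
    and k :: nat and P :: "nat \<Rightarrow> 'd set"
  assumes "finite X" and "card X \<ge> 2"
    and "xs \<in> X" and "ys \<in> X" and "xs \<noteq> ys"
    and "\<forall>x\<in>X. \<forall>y\<in>X. x \<noteq> y \<longrightarrow> (norm (xs - ys))\<^sup>2 \<le> (norm (x - y))\<^sup>2"
    and "\<sigma> > 0"
    and "\<sigma> \<le> (norm (xs - ys))\<^sup>2 / ln (3 * real (card X))"
    and "is_k_partition X k P"
  shows "\<forall>x\<in>X. \<forall>j<k. x \<in> P j \<longrightarrow>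
           (\<forall>i<k. feat_dist (rbf_kernel \<sigma>) (P j) x \<le> feat_dist (rbf_kernel \<sigma>) (P i) x)"
proof (intro ballI allI impI)
  fix x j i assume "x \<in> X" "j < k" "x \<in> P j" "i < k"
  define n where "n = 3 * real (card X)"
  have "n \<ge> 6" "ln n > 0"
    using assms(2) by (auto simp: n_def)
  have "\<sigma> * ln n \<le> (norm (xs - ys))\<^sup>2"
    using assms(8) \<open>ln n > 0\<close> by (simp add: n_def pos_le_divide_eq)
  then have small: "rbf_kernel \<sigma> y z \<le> 1 / n" if "y \<in> X" "z \<in> X" "y \<noteq> z" for y z
    using assms(6,7) that \<open>n \<ge> 6\<close> by (intro rbf_kernel_le_inverse) (auto intro: order_trans)
  show "feat_dist (rbf_kernel \<sigma>) (P j) x \<le> feat_dist (rbf_kernel \<sigma>) (P i) x"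
  proof (cases "i = j")
    case False
    with \<open>x \<in> P j\<close> \<open>i < k\<close> \<open>j < k\<close> assms(9) have "x \<notin> P i" "P i \<noteq> {}" "P i \<subseteq> X" "P j \<subseteq> X"
      unfolding is_k_partition_def by blast+
    then show ?thesis
      using assms(1) \<open>x \<in> P j\<close> small \<open>n \<ge> 6\<close>
      by (intro feat_dist_own_cluster_le_other[where e = "1 / n"])
        (auto simp: rbf_kernel_nonneg n_def)
  qed simp
qed

end
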